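(* Let $F$ be a finite field with $q=|F|$. Let $r,m,n\in\mathbb{N}$ satisfy $m\le n$. Then the number of $(m+n+1)$-tuples $x\in F^{m+n+1}$ satisfying $\operatorname{rank}(H_{m,n}(x))=r$ equals $1$ if $r=0$; $q^{2r-2}(q^2-1)$ if $0<r\le m$; $q^{2r-2}(q^{n-m+1}-1)$ if $r=m+1$; and $0$ if $r>m+1$.
   Context: $\mathbb{N}=\{0,1,2,\ldots\}$. For $N\in\mathbb{N}$, $x=(x_0,\ldots,x_N)\in F^{N+1}$ and integers $p,p'\ge -1$ with $p+p'\le N$, the Hankel matrix $H_{p,p'}(x)$ is the $(p+1)\times(p'+1)$ matrix $(x_{i+j})_{0\le i\le p,\,0\le j\le p'}$. *)

theory Defs
  imports "Jordan_Normal_Form.DL_Rank"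
begin

definition hankel :: "nat \<Rightarrow> nat \<Rightarrow> 'a list \<Rightarrow> 'a mat" where
  "hankel p p' x = mat (p + 1) (p' + 1) (\<lambda>(i, j). x ! (i + j))"

definition mrank :: "'a::field mat \<Rightarrow> nat" where
  "mrank A = vec_space.rank (dim_row A) A"

end

theory Submission
  imports Defs "HOL-Computational_Algebra.Formal_Power_Series"
begin

(*
  Let x be a nonzero tuple whose first nonzero entry is x_k. If k >= m, the matrix
  H_{m,n}(x) is anti-triangular and its rank is min(m+1, m+n+1-k). If k < m, let u be the
  inverse of the power series x_k + x_{k+1} t + ... . Multiplying H_{m,n}(x) on both sides
  by triangular matrices built from u makes it block diagonal: the invertible leading
  (k+1) x (k+1) Hankel block, and H_{m-k-1,n-k-1}(y) with y_e = -u_{e+k+2}. So the rank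
  drops by k+1, and since truncated power series inversion is an involution,
  x |-> (u_0, ..., u_{k+1}, y) is a bijection onto (F^* x F^{k+1}) x F^{m+n-2k-1}.
  Summing over k gives a recursion for the counts, which the closed form satisfies by
  geometric sums. Ranks are compared through the size q^rank of the column space.
*)

section \<open>Counting via column spaces\<close>

context vec_space
begin

lemma inj_on_lincomb_lin_indpt:
  assumes fin: "finite S" and SC: "S \<subseteq> carrier_vec n" and li: "lin_indpt S"
  shows "inj_on (\<lambda>a. lincomb a S) (S \<rightarrow>\<^sub>E UNIV)"
proof
  fix a b assume a: "a \<in> S \<rightarrow>\<^sub>E UNIV" and b: "b \<in> S \<rightarrow>\<^sub>E UNIV" and eq: "lincomb a S = lincomb b S"
  have "lincomb (\<lambda>v. a v - b v) S = lincomb a S \<ominus>\<^bsub>V\<^esub> lincomb b S"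
    by (rule lincomb_diff[OF fin SC])
  also have "\<dots> = \<zero>\<^bsub>V\<^esub>"
    using eq lincomb_closed[OF SC] M.r_neg[of "lincomb b S"] by (simp add: a_minus_def)
  finally have zero: "lincomb (\<lambda>v. a v - b v) S = \<zero>\<^bsub>V\<^esub>" .
  have "a v - b v = 0" if "v \<in> S" for v
  proof (rule ccontr)
    assume "a v - b v \<noteq> 0"
    then have "lin_dep S"
      using zero fin that by (intro lin_dep_crit[where A=S and S=S and a="\<lambda>v. a v - b v" and v=v]) auto
    then show False using li by simp
  qed
  then show "a = b" by (intro PiE_ext[OF a b]) simp
qed

lemma card_span_lin_indpt:
  assumes fin: "finite S" and SC: "S \<subseteq> carrier_vec n" and li: "lin_indpt S"
  shows "card (span S) = card (UNIV :: 'a set) ^ card S"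
proof -
  have span: "span S = {lincomb a S |a. a \<in> S \<rightarrow> carrier class_ring}"
    using finite_span[OF fin] SC by simp
  have "span S = (\<lambda>a. lincomb a S) ` (S \<rightarrow>\<^sub>E UNIV)"
  proof
    show "span S \<subseteq> (\<lambda>a. lincomb a S) ` (S \<rightarrow>\<^sub>E UNIV)"
    proof
      fix v assume "v \<in> span S"
      then obtain a where a: "lincomb a S = v" using span by auto
      have "lincomb (restrict a S) S = lincomb a S"
        by (rule lincomb_cong) (use SC in auto)
      then show "v \<in> (\<lambda>a. lincomb a S) ` (S \<rightarrow>\<^sub>E UNIV)"
        using a by (intro image_eqI[where x="restrict a S"]) auto
    qed
  qed (use span in auto)
  then have "card (span S) = card (S \<rightarrow>\<^sub>E (UNIV::'a set))"
    using card_image[OF inj_on_lincomb_lin_indpt[OF assms]] by simp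
  then show ?thesis by (simp add: card_PiE fin)
qed

lemma card_col_space:
  assumes A: "A \<in> carrier_mat n nc"
  shows "card (col_space A) = card (UNIV :: 'a set) ^ rank A"
proof -
  have "lin_indpt {}" by (simp add: lin_dep_def)
  then obtain S where fin: "finite S" and max: "maximal S (\<lambda>T. T \<subseteq> set (cols A) \<and> lin_indpt T)"
    using maximal_exists_superset[of "set (cols A)" "\<lambda>T. T \<subseteq> set (cols A) \<and> lin_indpt T" "{}"]
    by auto
  have cols: "set (cols A) \<subseteq> carrier_vec n" using A cols_dim by blast
  have SA: "S \<subseteq> set (cols A)" and li: "lin_indpt S" using max unfolding maximal_def by auto
  have SC: "S \<subseteq> carrier_vec n" using SA cols by auto
  have "set (cols A) \<subseteq> span S"
  proof
    fix c assume c: "c \<in> set (cols A)"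
    show "c \<in> span S"
    proof (cases "c \<in> S")
      case True then show ?thesis using in_own_span[OF SC] by auto
    next
      case False
      have "\<not> lin_indpt (S \<union> {c})"
      proof
        assume "lin_indpt (S \<union> {c})"
        then have "S \<union> {c} = S" using max c SA unfolding maximal_def by auto
        then show False using False by auto
      qed
      then show ?thesis using lin_dep_iff_in_span[OF SC li _ False] c cols by auto
    qed
  qed
  then have "span (set (cols A)) = span S"
    using span_is_subset[OF _ span_is_submodule[OF SC]] span_is_monotone[OF SA] by blast
  then show ?thesis
    using card_span_lin_indpt[OF fin SC li] rank_card_indpt[OF A max] by (simp add: col_space_def)
qed

end

section \<open>Matrices as functions\<close>

text \<open>An \<open>a \<times> b\<close> matrix is a function \<^typ>\<open>nat \<Rightarrow> nat \<Rightarrow> 'a\<close> read on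
  \<open>[0,a) \<times> [0,b)\<close>, a \<open>d\<close>-dimensional vector a function vanishing from \<open>d\<close> on;
  this avoids the dimension bookkeeping of \<^typ>\<open>'a mat\<close> when multiplying and splitting
  into blocks.\<close>

definition vecs :: "nat \<Rightarrow> (nat \<Rightarrow> 'a::zero) set" where
  "vecs d = {v. \<forall>j\<ge>d. v j = 0}"

definition mat_app :: "(nat \<Rightarrow> nat \<Rightarrow> 'a::comm_semiring_0) \<Rightarrow> nat \<Rightarrow> nat \<Rightarrow> (nat \<Rightarrow> 'a) \<Rightarrow> nat \<Rightarrow> 'a" where
  "mat_app M a b v = (\<lambda>i. if i < a then (\<Sum>j<b. M i j * v j) else 0)"

definition mat_image :: "(nat \<Rightarrow> nat \<Rightarrow> 'a::comm_semiring_0) \<Rightarrow> nat \<Rightarrow> nat \<Rightarrow> (nat \<Rightarrow> 'a) set" where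
  "mat_image M a b = mat_app M a b ` vecs b"

definition mat_comp :: "(nat \<Rightarrow> nat \<Rightarrow> 'a::comm_semiring_0) \<Rightarrow> (nat \<Rightarrow> nat \<Rightarrow> 'a) \<Rightarrow> nat \<Rightarrow> nat \<Rightarrow> nat \<Rightarrow> 'a" where
  "mat_comp M N c = (\<lambda>i j. \<Sum>l<c. M i l * N l j)"

definition block_diag :: "nat \<Rightarrow> (nat \<Rightarrow> nat \<Rightarrow> 'a::zero) \<Rightarrow> (nat \<Rightarrow> nat \<Rightarrow> 'a) \<Rightarrow> nat \<Rightarrow> nat \<Rightarrow> 'a" where
  "block_diag k T D = (\<lambda>i j. if i < k \<and> j < k then T i j
     else if k \<le> i \<and> k \<le> j then D (i - k) (j - k) else 0)"

definition vec_join :: "nat \<Rightarrow> (nat \<Rightarrow> 'a) \<Rightarrow> (nat \<Rightarrow> 'a) \<Rightarrow> nat \<Rightarrow> 'a" where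
  "vec_join k v w = (\<lambda>i. if i < k then v i else w (i - k))"

lemma vecs_eq_image_PiE: "vecs d = (\<lambda>f j. if j < d then f j else 0) ` ({..<d} \<rightarrow>\<^sub>E UNIV)"
proof
  show "vecs d \<subseteq> (\<lambda>f j. if j < d then f j else 0) ` ({..<d} \<rightarrow>\<^sub>E UNIV)"
  proof
    fix v assume "v \<in> vecs d"
    then have "v = (\<lambda>j. if j < d then restrict v {..<d} j else 0)"
      by (auto simp: vecs_def fun_eq_iff)
    moreover have "restrict v {..<d} \<in> {..<d} \<rightarrow>\<^sub>E UNIV" by auto
    ultimately show "v \<in> (\<lambda>f j. if j < d then f j else 0) ` ({..<d} \<rightarrow>\<^sub>E UNIV)"
      by (rule image_eqI)
  qed
  show "(\<lambda>f j. if j < d then f j else 0) ` ({..<d} \<rightarrow>\<^sub>E UNIV) \<subseteq> vecs d"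
    unfolding vecs_def by (rule image_subsetI) simp
qed

lemma card_vecs: "card (vecs d :: (nat \<Rightarrow> 'a::zero) set) = card (UNIV :: 'a set) ^ d"
proof -
  have "inj_on (\<lambda>f j. if j < d then f j else (0::'a)) ({..<d} \<rightarrow>\<^sub>E UNIV)"
  proof
    fix f g :: "nat \<Rightarrow> 'a" assume f: "f \<in> {..<d} \<rightarrow>\<^sub>E UNIV" and g: "g \<in> {..<d} \<rightarrow>\<^sub>E UNIV"
      and eq: "(\<lambda>j. if j < d then f j else 0) = (\<lambda>j. if j < d then g j else 0)"
    show "f = g"
    proof (rule PiE_ext[OF f g])
      fix j assume "j \<in> {..<d}"
      then show "f j = g j" using fun_cong[OF eq, of j] by simp
    qed
  qed
  then show ?thesis by (simp add: vecs_eq_image_PiE card_image card_PiE)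
qed

lemma finite_vecs: "finite (vecs d :: (nat \<Rightarrow> 'a::{finite,zero}) set)"
  unfolding vecs_eq_image_PiE by (intro finite_imageI finite_PiE) auto

lemma mat_app_in_vecs: "mat_app M a b v \<in> vecs a"
  by (simp add: mat_app_def vecs_def)

lemma mat_image_subset_vecs: "mat_image M a b \<subseteq> vecs a"
  by (auto simp: mat_image_def mat_app_in_vecs)

lemma mat_image_cong:
  assumes "\<And>i j. i < a \<Longrightarrow> j < b \<Longrightarrow> M i j = M' i j"
  shows "mat_image M a b = mat_image M' a b"
  unfolding mat_image_def mat_app_def using assms by (intro image_cong) (auto intro!: sum.cong)

lemma mat_app_mat_comp: "mat_app (mat_comp M N c) a b v = mat_app M a c (mat_app N c b v)"
proof
  fix i
  have "(\<Sum>j<b. (\<Sum>l<c. M i l * N l j) * v j) = (\<Sum>l<c. M i l * (\<Sum>j<b. N l j * v j))"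
    by (simp add: sum_distrib_left sum_distrib_right mult.assoc sum.swap[of _ "{..<b}"])
  then show "mat_app (mat_comp M N c) a b v i = mat_app M a c (mat_app N c b v) i"
    by (simp add: mat_app_def mat_comp_def)
qed

lemma mat_image_mat_comp:
  "mat_image (mat_comp M N c) a b = mat_app M a c ` mat_image N c b"
  by (simp add: mat_image_def mat_app_mat_comp image_image)

lemma inj_on_mat_app_kernel:
  fixes M :: "nat \<Rightarrow> nat \<Rightarrow> 'a::comm_ring"
  assumes "\<And>v. v \<in> vecs b \<Longrightarrow> mat_app M a b v = (\<lambda>_. 0) \<Longrightarrow> v = (\<lambda>_. 0)"
  shows "inj_on (mat_app M a b) (vecs b)"
proof
  fix v w assume v: "v \<in> vecs b" and w: "w \<in> vecs b" and eq: "mat_app M a b v = mat_app M a b w"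
  have diff: "(\<lambda>j. v j - w j) \<in> vecs b" using v w by (simp add: vecs_def)
  have "mat_app M a b (\<lambda>j. v j - w j) = (\<lambda>i. mat_app M a b v i - mat_app M a b w i)"
    by (auto simp: mat_app_def fun_eq_iff right_diff_distrib sum_subtractf)
  then have "mat_app M a b (\<lambda>j. v j - w j) = (\<lambda>_. 0)" using eq by simp
  with diff have "(\<lambda>j. v j - w j) = (\<lambda>_. 0)" by (rule assms)
  then show "v = w" by (auto simp: fun_eq_iff dest: fun_cong)
qed

lemma mat_app_square_surj:
  fixes M :: "nat \<Rightarrow> nat \<Rightarrow> 'a::{finite,comm_semiring_0}"
  assumes "inj_on (mat_app M d d) (vecs d)"
  shows "mat_app M d d ` vecs d = vecs d"
  using card_image[OF assms] mat_app_in_vecs finite_vecs by (intro card_subset_eq) auto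

text \<open>On a kernel vector, the row whose pivot is the support column of largest weight
  \<open>c\<close> forces that entry to vanish.\<close>

lemma inj_on_mat_app_pivot:
  fixes M :: "nat \<Rightarrow> nat \<Rightarrow> 'a::idom" and p c :: "nat \<Rightarrow> nat"
  assumes pivot: "\<And>i. i < d \<Longrightarrow> M i (p i) \<noteq> 0"
    and onto: "\<And>j. j < d \<Longrightarrow> \<exists>i<d. p i = j"
    and shape: "\<And>i j. i < d \<Longrightarrow> j < d \<Longrightarrow> M i j \<noteq> 0 \<Longrightarrow> j \<noteq> p i \<Longrightarrow> c (p i) < c j"
  shows "inj_on (mat_app M d d) (vecs d)"
proof (rule inj_on_mat_app_kernel, rule ccontr)
  fix v assume v: "v \<in> vecs d" and ker: "mat_app M d d v = (\<lambda>_. 0)" and "v \<noteq> (\<lambda>_. 0)"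
  define J where "J = {j. j < d \<and> v j \<noteq> 0}"
  have "J \<noteq> {}" using v \<open>v \<noteq> (\<lambda>_. 0)\<close> by (auto simp: J_def vecs_def) (meson not_le)
  moreover have "finite J" by (simp add: J_def)
  ultimately have "Max (c ` J) \<in> c ` J" by simp
  then obtain j0 where j0: "j0 \<in> J" and j0c: "c j0 = Max (c ` J)" by auto
  have j0max: "c j \<le> c j0" if "j \<in> J" for j
    unfolding j0c using \<open>finite J\<close> that by simp
  obtain i where i: "i < d" "p i = j0" using onto j0 by (auto simp: J_def)
  have other: "M i j * v j = 0" if "j \<in> {..<d} - {j0}" for j
  proof (rule ccontr)
    assume "M i j * v j \<noteq> 0"
    then have "j \<in> J" "M i j \<noteq> 0" using that by (auto simp: J_def)
    then show False
      using j0max[of j] shape[OF i(1), of j] i that by (simp add: J_def)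
  qed
  have "0 = (\<Sum>j<d. M i j * v j)" using fun_cong[OF ker, of i] i by (simp add: mat_app_def)
  also have "\<dots> = M i j0 * v j0 + (\<Sum>j\<in>{..<d} - {j0}. M i j * v j)"
    using j0 by (subst sum.remove[of _ j0]) (auto simp: J_def)
  also have "(\<Sum>j\<in>{..<d} - {j0}. M i j * v j) = 0"
    by (rule sum.neutral) (use other in blast)
  finally show False using pivot[OF i(1)] i j0 by (simp add: J_def)
qed

definition fun_of_vec :: "'a::zero vec \<Rightarrow> nat \<Rightarrow> 'a" where
  "fun_of_vec w = (\<lambda>i. if i < dim_vec w then w $ i else 0)"

lemma inj_on_fun_of_vec: "inj_on fun_of_vec (carrier_vec a)"
proof
  fix w1 w2 :: "'a vec" assume "w1 \<in> carrier_vec a" "w2 \<in> carrier_vec a" and eq: "fun_of_vec w1 = fun_of_vec w2"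
  then have dims: "dim_vec w1 = a" "dim_vec w2 = a" by auto
  show "w1 = w2"
  proof (rule eq_vecI)
    fix i assume "i < dim_vec w2"
    then show "w1 $ i = w2 $ i" using fun_cong[OF eq, of i] dims by (simp add: fun_of_vec_def)
  qed (use dims in simp)
qed

lemma fun_of_vec_mult_mat_vec:
  assumes "v \<in> carrier_vec b"
  shows "fun_of_vec (mat a b (\<lambda>(i, j). M i j) *\<^sub>v v) = mat_app M a b (fun_of_vec v)"
  using assms by (auto simp: fun_of_vec_def mat_app_def fun_eq_iff scalar_prod_def atLeast0LessThan intro!: sum.cong)

lemma mat_image_eq_col_space:
  fixes M :: "nat \<Rightarrow> nat \<Rightarrow> 'a::field"
  shows "fun_of_vec ` vec_space.col_space a (mat a b (\<lambda>(i, j). M i j)) = mat_image M a b"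
proof -
  let ?A = "mat a b (\<lambda>(i, j). M i j)"
  have A: "?A \<in> carrier_mat a b" by simp
  have cs: "vec_space.col_space a ?A = {?A *\<^sub>v v | v. v \<in> carrier_vec b}"
    using vec_space.col_space_eq[OF A] by (auto intro: mult_mat_vec_carrier[OF A])
  show ?thesis
  proof
    show "fun_of_vec ` vec_space.col_space a ?A \<subseteq> mat_image M a b"
    proof
      fix y assume "y \<in> fun_of_vec ` vec_space.col_space a ?A"
      then obtain v where "v \<in> carrier_vec b" "y = fun_of_vec (?A *\<^sub>v v)" by (auto simp: cs)
      moreover have "fun_of_vec v \<in> vecs b" using \<open>v \<in> carrier_vec b\<close> by (simp add: vecs_def fun_of_vec_def)
      ultimately show "y \<in> mat_image M a b" unfolding mat_image_def by (simp add: fun_of_vec_mult_mat_vec)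
    qed
    show "mat_image M a b \<subseteq> fun_of_vec ` vec_space.col_space a ?A"
    proof
      fix y assume "y \<in> mat_image M a b"
      then obtain u where u: "u \<in> vecs b" "y = mat_app M a b u" by (auto simp: mat_image_def)
      have "fun_of_vec (vec b u) = u" using u(1) by (auto simp: vecs_def fun_of_vec_def fun_eq_iff)
      then have "y = fun_of_vec (?A *\<^sub>v vec b u)" using fun_of_vec_mult_mat_vec[of "vec b u" b] u(2) by simp
      moreover have "?A *\<^sub>v vec b u \<in> vec_space.col_space a ?A" unfolding cs by auto
      ultimately show "y \<in> fun_of_vec ` vec_space.col_space a ?A" by blast
    qed
  qed
qed

lemma card_mat_image_mrank:
  fixes M :: "nat \<Rightarrow> nat \<Rightarrow> 'a::{finite,field}"
  shows "card (mat_image M a b) = card (UNIV :: 'a set) ^ mrank (mat a b (\<lambda>(i, j). M i j))"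
proof -
  let ?A = "mat a b (\<lambda>(i, j). M i j)"
  have A: "?A \<in> carrier_mat a b" by simp
  have "vec_space.col_space a ?A \<subseteq> carrier_vec a"
    using vec_space.col_space_eq[OF A] by auto
  then have "card (mat_image M a b) = card (vec_space.col_space a ?A)"
    unfolding mat_image_eq_col_space[symmetric] by (intro card_image inj_on_subset[OF inj_on_fun_of_vec])
  then show ?thesis by (simp add: vec_space.card_col_space[OF A] mrank_def)
qed

lemma sum_lessThan_add: "(\<Sum>j<k + (b::nat). f j) = (\<Sum>j<k. f j) + (\<Sum>j<b. f (j + k))"
  by (induction b) (auto simp: add_ac)

lemma mat_app_block_diag:
  "mat_app (block_diag k T D) (k + a) (k + b) v =
     vec_join k (mat_app T k k (\<lambda>j. if j < k then v j else 0)) (mat_app D a b (\<lambda>j. v (j + k)))"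
proof
  fix i
  show "mat_app (block_diag k T D) (k + a) (k + b) v i =
    vec_join k (mat_app T k k (\<lambda>j. if j < k then v j else 0)) (mat_app D a b (\<lambda>j. v (j + k))) i"
    by (cases "i < k") (auto simp: mat_app_def block_diag_def vec_join_def sum_lessThan_add)
qed

lemma mat_image_block_diag:
  assumes "mat_app T k k ` vecs k = vecs k"
  shows "mat_image (block_diag k T D) (k + a) (k + b) = (\<lambda>(v, w). vec_join k v w) ` (vecs k \<times> mat_image D a b)"
proof
  show "mat_image (block_diag k T D) (k + a) (k + b) \<subseteq> (\<lambda>(v, w). vec_join k v w) ` (vecs k \<times> mat_image D a b)"
  proof
    fix y assume "y \<in> mat_image (block_diag k T D) (k + a) (k + b)"
    then obtain v where v: "v \<in> vecs (k + b)" "y = mat_app (block_diag k T D) (k + a) (k + b) v"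
      by (auto simp: mat_image_def)
    have "(\<lambda>j. v (j + k)) \<in> vecs b" using v(1) by (auto simp: vecs_def)
    then show "y \<in> (\<lambda>(v, w). vec_join k v w) ` (vecs k \<times> mat_image D a b)"
      unfolding v(2) mat_app_block_diag
      by (intro image_eqI[where x="(mat_app T k k (\<lambda>j. if j < k then v j else 0), mat_app D a b (\<lambda>j. v (j + k)))"])
        (auto simp: mat_image_def mat_app_in_vecs)
  qed
  show "(\<lambda>(v, w). vec_join k v w) ` (vecs k \<times> mat_image D a b) \<subseteq> mat_image (block_diag k T D) (k + a) (k + b)"
  proof clarify
    fix w1 w2 :: "nat \<Rightarrow> 'a" assume "w1 \<in> vecs k" "w2 \<in> mat_image D a b"
    obtain v1 where v1: "v1 \<in> vecs k" "w1 = mat_app T k k v1"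
      using assms \<open>w1 \<in> vecs k\<close> by (metis imageE)
    obtain v2 where v2: "v2 \<in> vecs b" "w2 = mat_app D a b v2"
      using \<open>w2 \<in> mat_image D a b\<close> unfolding mat_image_def by blast
    have "vec_join k v1 v2 \<in> vecs (k + b)" using v2(1) by (auto simp: vecs_def vec_join_def)
    moreover have "(\<lambda>j. if j < k then vec_join k v1 v2 j else 0) = v1"
      using v1(1) by (auto simp: vecs_def vec_join_def fun_eq_iff)
    moreover have "(\<lambda>j. vec_join k v1 v2 (j + k)) = v2" by (simp add: vec_join_def)
    ultimately show "vec_join k w1 w2 \<in> mat_image (block_diag k T D) (k + a) (k + b)"
      unfolding mat_image_def v1(2) v2(2)
      by (intro image_eqI[OF _ \<open>vec_join k v1 v2 \<in> vecs (k + b)\<close>]) (simp only: mat_app_block_diag)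
  qed
qed

lemma card_mat_image_block_diag:
  fixes T D :: "nat \<Rightarrow> nat \<Rightarrow> 'a::{finite,field}"
  assumes "inj_on (mat_app T k k) (vecs k)"
  shows "card (mat_image (block_diag k T D) (k + a) (k + b)) = card (UNIV :: 'a set) ^ k * card (mat_image D a b)"
proof -
  have "inj_on (\<lambda>(v, w). vec_join k v w) ((vecs k :: (nat \<Rightarrow> 'a) set) \<times> mat_image D a b)"
  proof (rule inj_onI, clarify)
    fix v w v' w' :: "nat \<Rightarrow> 'a"
    assume "v \<in> vecs k" "v' \<in> vecs k" and eq: "vec_join k v w = vec_join k v' w'"
    have "v i = v' i" for i
      using fun_cong[OF eq, of i] \<open>v \<in> vecs k\<close> \<open>v' \<in> vecs k\<close>
      by (cases "i < k") (auto simp: vec_join_def vecs_def)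
    moreover have "w i = w' i" for i using fun_cong[OF eq, of "i + k"] by (simp add: vec_join_def)
    ultimately show "v = v' \<and> w = w'" by auto
  qed
  then have "card (mat_image (block_diag k T D) (k + a) (k + b)) =
      card ((vecs k :: (nat \<Rightarrow> 'a) set) \<times> mat_image D a b)"
    unfolding mat_image_block_diag[OF mat_app_square_surj[OF assms]] by (simp add: card_image)
  then show ?thesis by (simp add: card_cartesian_product card_vecs)
qed

lemma mat_image_zero:
  assumes "\<And>i j. i < a \<Longrightarrow> j < b \<Longrightarrow> M i j = 0"
  shows "mat_image M a b = {\<lambda>_. 0}"
proof -
  have "mat_app M a b v = (\<lambda>_. 0)" for v using assms by (auto simp: mat_app_def fun_eq_iff)
  moreover have "(\<lambda>_. 0) \<in> vecs b" by (simp add: vecs_def)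
  ultimately show ?thesis unfolding mat_image_def by auto
qed

lemma card_mat_image_drop_zero_rows:
  assumes "\<And>i j. i < z \<Longrightarrow> j < b \<Longrightarrow> M i j = 0"
  shows "card (mat_image M (z + a) b) = card (mat_image (\<lambda>i j. M (i + z) j) a b)"
proof -
  let ?shift = "\<lambda>w. (\<lambda>i. if i < z then 0 else w (i - z))"
  have "mat_app M (z + a) b v = ?shift (mat_app (\<lambda>i j. M (i + z) j) a b v)" for v
    using assms by (auto simp: mat_app_def fun_eq_iff)
  then have "mat_image M (z + a) b = ?shift ` mat_image (\<lambda>i j. M (i + z) j) a b"
    unfolding mat_image_def by (simp add: image_image)
  moreover have "inj_on ?shift (mat_image (\<lambda>i j. M (i + z) j) a b)"
  proof (rule inj_on_subset[OF injI subset_UNIV])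
    fix w1 w2 assume eq: "?shift w1 = ?shift w2"
    show "w1 = w2"
    proof
      fix i show "w1 i = w2 i" using fun_cong[OF eq, of "i + z"] by simp
    qed
  qed
  ultimately show ?thesis by (simp add: card_image)
qed

lemma mat_app_drop_cols:
  assumes "off + a \<le> b" "v \<in> vecs a"
  shows "mat_app M c b (\<lambda>j. if off \<le> j then v (j - off) else 0) = mat_app (\<lambda>i j. M i (j + off)) c a v"
proof
  fix i
  let ?v = "\<lambda>j. if off \<le> j then v (j - off) else 0"
  have "(\<Sum>j<b. M i j * ?v j) = (\<Sum>j<off + (a + (b - off - a)). M i j * ?v j)"
    using assms(1) by (simp add: add.assoc[symmetric])
  also have "\<dots> = (\<Sum>j<a + (b - off - a). M i (j + off) * v j)"
    by (simp only: sum_lessThan_add) simp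
  also have "\<dots> = (\<Sum>j<a. M i (j + off) * v j)"
    using assms(2) by (simp only: sum_lessThan_add) (simp add: vecs_def)
  finally show "mat_app M c b ?v i = mat_app (\<lambda>i j. M i (j + off)) c a v i"
    by (simp add: mat_app_def)
qed

section \<open>Reduction of Hankel matrices\<close>

text \<open>With \<open>u\<close> the inverse of \<open>x\<^sub>k + x\<^sub>k\<^sub>+\<^sub>1 t + \<dots>\<close>, this is the lower triangular
  matrix \<open>P\<close> with \<open>P H P\<^sup>T\<close> block diagonal: rows \<open>a \<le> k\<close>
  are unit vectors, row \<open>a > k\<close> convolves with \<open>u\<close>.\<close>

definition hankel_reducer :: "'a::field fps \<Rightarrow> nat \<Rightarrow> nat \<Rightarrow> nat \<Rightarrow> 'a" where
  "hankel_reducer u k a i =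
     (if a \<le> k then (if i = a then 1 else 0) else if i \<le> a then fps_nth u (a - i) else 0)"

lemma hankel_reducer_above: "a < i \<Longrightarrow> hankel_reducer u k a i = 0"
  by (simp add: hankel_reducer_def)

lemma hankel_reducer_diag: "hankel_reducer u k a a = (if a \<le> k then 1 else fps_nth u 0)"
  by (simp add: hankel_reducer_def)

lemma sum_lessThan_hankel_reducer_right:
  assumes "b < B"
  shows "(\<Sum>j<B. g j * hankel_reducer u k b j) =
    (if b \<le> k then g b else (\<Sum>j=0..b. g j * fps_nth u (b - j)))"
proof (cases "b \<le> k")
  case True
  then have "(\<Sum>j<B. g j * hankel_reducer u k b j) = (\<Sum>j<B. if j = b then g j else 0)"
    by (intro sum.cong) (auto simp: hankel_reducer_def)
  then show ?thesis using True assms by simp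
next
  case False
  have "(\<Sum>j<B. g j * hankel_reducer u k b j) = (\<Sum>j=0..b. g j * hankel_reducer u k b j)"
    using assms by (intro sum.mono_neutral_right) (auto simp: hankel_reducer_def)
  also have "\<dots> = (\<Sum>j=0..b. g j * fps_nth u (b - j))"
    using False by (intro sum.cong) (auto simp: hankel_reducer_def)
  finally show ?thesis using False by simp
qed

lemma sum_lessThan_hankel_reducer_left:
  assumes "a < A"
  shows "(\<Sum>i<A. hankel_reducer u k a i * g i) =
    (if a \<le> k then g a else (\<Sum>i=0..a. fps_nth u (a - i) * g i))"
  using sum_lessThan_hankel_reducer_right[OF assms, of g u k] by (simp add: mult.commute)

lemma sum_atLeast0AtMost_split: "(\<Sum>j=0..p + (n::nat). f j) = (\<Sum>j<p. f j) + (\<Sum>e=0..n. f (p + e))"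
proof (induction n)
  case 0 then show ?case by (simp add: atLeast0AtMost lessThan_Suc_atMost[symmetric])
next
  case (Suc n) then show ?case by (simp add: add_ac)
qed

context
  fixes f u :: "'a::field fps" and k :: nat
  assumes zeros: "\<And>e. e < k \<Longrightarrow> fps_nth f e = 0" and shift_inverse: "fps_shift k f * u = 1"
begin

lemma shift_inverse_conv: "(\<Sum>e=0..n. fps_nth f (k + e) * fps_nth u (n - e)) = (if n = 0 then 1 else 0)"
proof -
  have "fps_nth (fps_shift k f * u) n = fps_nth (1::'a fps) n" by (simp add: shift_inverse)
  then show ?thesis by (simp add: fps_mult_nth add.commute)
qed

lemma inverse_nth_0_nonzero: "fps_nth u 0 \<noteq> 0"
  using shift_inverse_conv[of 0] by auto

lemma hankel_conv_low:
  assumes "i \<le> k"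
  shows "(\<Sum>j=0..b. fps_nth f (i + j) * fps_nth u (b - j)) = (if i + b = k then 1 else 0)"
proof (cases "b < k - i")
  case True
  then have "(\<Sum>j=0..b. fps_nth f (i + j) * fps_nth u (b - j)) = 0"
    by (intro sum.neutral) (auto simp: zeros)
  then show ?thesis using True by auto
next
  case False
  then obtain n where b: "b = (k - i) + n" using le_Suc_ex by (metis not_less)
  have "(\<Sum>j=0..b. fps_nth f (i + j) * fps_nth u (b - j)) =
    (\<Sum>j<k - i. fps_nth f (i + j) * fps_nth u (b - j)) + (\<Sum>e=0..n. fps_nth f (i + ((k - i) + e)) * fps_nth u (b - ((k - i) + e)))"
    unfolding b by (rule sum_atLeast0AtMost_split)
  also have "(\<Sum>j<k - i. fps_nth f (i + j) * fps_nth u (b - j)) = 0" by (intro sum.neutral) (auto simp: zeros)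
  also have "(\<Sum>e=0..n. fps_nth f (i + ((k - i) + e)) * fps_nth u (b - ((k - i) + e))) = (\<Sum>e=0..n. fps_nth f (k + e) * fps_nth u (n - e))"
    using assms b by (intro sum.cong) auto
  also have "\<dots> = (if n = 0 then 1 else 0)" by (rule shift_inverse_conv)
  finally show ?thesis using assms b by auto
qed

lemma hankel_conv_high:
  assumes "k < i"
  shows "(\<Sum>j=0..b. fps_nth f (i + j) * fps_nth u (b - j)) = - (\<Sum>e<i - k. fps_nth f (k + e) * fps_nth u (i - k + b - e))"
proof -
  have "(\<Sum>e=0..(i - k) + b. fps_nth f (k + e) * fps_nth u ((i - k) + b - e)) =
    (\<Sum>e<i - k. fps_nth f (k + e) * fps_nth u ((i - k) + b - e)) +
    (\<Sum>j=0..b. fps_nth f (k + ((i - k) + j)) * fps_nth u ((i - k) + b - ((i - k) + j)))"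
    by (rule sum_atLeast0AtMost_split)
  moreover have "(\<Sum>e=0..(i - k) + b. fps_nth f (k + e) * fps_nth u ((i - k) + b - e)) = 0"
    using shift_inverse_conv[of "(i - k) + b"] assms by simp
  moreover have "(\<Sum>j=0..b. fps_nth f (k + ((i - k) + j)) * fps_nth u ((i - k) + b - ((i - k) + j))) =
      (\<Sum>j=0..b. fps_nth f (i + j) * fps_nth u (b - j))"
    using assms by (intro sum.cong) auto
  ultimately show ?thesis by (simp add: eq_neg_iff_add_eq_0 add.commute)
qed

lemma hankel_conv_conv:
  assumes "k < a" "k < b"
  shows "(\<Sum>i=0..a. fps_nth u (a - i) * (\<Sum>j=0..b. fps_nth f (i + j) * fps_nth u (b - j))) = - fps_nth u (a + b - k)"
proof -
  define M where "M = a - (k + 1)"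
  have a: "a = (k + 1) + M" using assms(1) by (simp add: M_def)
  let ?conv = "\<lambda>i. (\<Sum>j=0..b. fps_nth f (i + j) * fps_nth u (b - j))"
  let ?tail = "fps_shift (b + 1) u"
  have "(\<Sum>i=0..a. fps_nth u (a - i) * ?conv i) =
      (\<Sum>i<k + 1. fps_nth u (a - i) * ?conv i) + (\<Sum>t=0..M. fps_nth u (a - (k + 1 + t)) * ?conv (k + 1 + t))"
    unfolding a by (rule sum_atLeast0AtMost_split)
  also have "(\<Sum>i<k + 1. fps_nth u (a - i) * ?conv i) = 0"
    using assms by (intro sum.neutral) (auto simp: hankel_conv_low)
  also have "(\<Sum>t=0..M. fps_nth u (a - (k + 1 + t)) * ?conv (k + 1 + t)) =
      (\<Sum>t=0..M. - (fps_nth (fps_shift k f * ?tail) t * fps_nth u (M - t)))"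
  proof (rule sum.cong[OF refl])
    fix t assume t: "t \<in> {0..M}"
    have "?conv (k + 1 + t) = - (\<Sum>e=0..t. fps_nth f (k + e) * fps_nth u (t + 1 + b - e))"
      using hankel_conv_high[of "k + 1 + t" b] by (simp add: atLeast0AtMost lessThan_Suc_atMost)
    also have "(\<Sum>e=0..t. fps_nth f (k + e) * fps_nth u (t + 1 + b - e)) =
        (\<Sum>e=0..t. fps_nth f (k + e) * fps_nth u (t - e + (b + 1)))"
    proof (rule sum.cong[OF refl])
      fix e assume "e \<in> {0..t}"
      then have "t + 1 + b - e = t - e + (b + 1)" by auto
      then show "fps_nth f (k + e) * fps_nth u (t + 1 + b - e) = fps_nth f (k + e) * fps_nth u (t - e + (b + 1))"
        by simp
    qed
    also have "\<dots> = fps_nth (fps_shift k f * ?tail) t"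
      by (simp add: fps_mult_nth add.commute)
    finally show "fps_nth u (a - (k + 1 + t)) * ?conv (k + 1 + t) = - (fps_nth (fps_shift k f * ?tail) t * fps_nth u (M - t))"
      using a t by (simp add: mult.commute)
  qed
  also have "\<dots> = - fps_nth (fps_shift k f * ?tail * u) M"
    by (simp add: fps_mult_nth sum_negf)
  also have "fps_shift k f * ?tail * u = ?tail"
    by (simp add: mult.commute mult.left_commute shift_inverse[unfolded mult.commute[of "fps_shift k f"]])
  finally show ?thesis using a by (simp add: add_ac)
qed

lemma hankel_reducer_entry:
  assumes "a < A" "b < B"
  shows "(\<Sum>i<A. hankel_reducer u k a i * (\<Sum>j<B. fps_nth f (i + j) * hankel_reducer u k b j)) =
    (if a \<le> k \<and> b \<le> k then fps_nth f (a + b) else if k < a \<and> k < b then - fps_nth u (a + b - k) else 0)"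
proof -
  define g where "g i = (if b \<le> k then fps_nth f (i + b) else (\<Sum>j=0..b. fps_nth f (i + j) * fps_nth u (b - j)))" for i
  have "(\<Sum>i<A. hankel_reducer u k a i * (\<Sum>j<B. fps_nth f (i + j) * hankel_reducer u k b j)) =
      (\<Sum>i<A. hankel_reducer u k a i * g i)"
    by (intro sum.cong refl) (simp add: g_def sum_lessThan_hankel_reducer_right[OF assms(2)])
  also have "\<dots> = (if a \<le> k then g a else (\<Sum>i=0..a. fps_nth u (a - i) * g i))"
    by (rule sum_lessThan_hankel_reducer_left[OF assms(1)])
  also have "\<dots> = (if a \<le> k \<and> b \<le> k then fps_nth f (a + b) else if k < a \<and> k < b then - fps_nth u (a + b - k) else 0)"
  proof (cases "a \<le> k")
    case True
    then show ?thesis using hankel_conv_low[OF True, of b] by (auto simp: g_def)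
  next
    case False
    show ?thesis
    proof (cases "b \<le> k")
      case True
      have "(\<Sum>i=0..a. fps_nth u (a - i) * g i) = (\<Sum>j=0..a. fps_nth f (b + j) * fps_nth u (a - j))"
        using True by (intro sum.cong) (auto simp: g_def add.commute mult.commute)
      then show ?thesis using hankel_conv_low[OF True, of a] False True by auto
    next
      case b_large: False
      then show ?thesis using hankel_conv_conv[of a b] False by (simp add: g_def)
    qed
  qed
  finally show ?thesis .
qed

end

lemma inj_on_mat_app_lower_triangular:
  fixes M :: "nat \<Rightarrow> nat \<Rightarrow> 'a::idom"
  assumes "\<And>i. i < d \<Longrightarrow> M i i \<noteq> 0" and "\<And>i j. i < j \<Longrightarrow> M i j = 0"
  shows "inj_on (mat_app M d d) (vecs d)"
proof (rule inj_on_mat_app_pivot[where p=id and c="\<lambda>j. d - j"])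
  fix i j assume "i < d" "j < d" "M i j \<noteq> 0" "j \<noteq> id i"
  then show "d - id i < d - j" using assms(2)[of i j] by (cases "i < j") auto
qed (use assms(1) in auto)

lemma inj_on_mat_app_upper_triangular:
  fixes M :: "nat \<Rightarrow> nat \<Rightarrow> 'a::idom"
  assumes "\<And>i. i < d \<Longrightarrow> M i i \<noteq> 0" and "\<And>i j. j < i \<Longrightarrow> M i j = 0"
  shows "inj_on (mat_app M d d) (vecs d)"
proof (rule inj_on_mat_app_pivot[where p=id and c=id])
  fix i j assume "M i j \<noteq> 0" "j \<noteq> id i"
  then show "id (id i) < id j" using assms(2)[of j i] by (cases "j < i") auto
qed (use assms(1) in auto)

lemma inj_on_hankel_square:
  fixes f :: "'a::field fps"
  assumes zeros: "\<And>e. e < k \<Longrightarrow> fps_nth f e = 0" and lead: "fps_nth f k \<noteq> 0" and "off + A = k + 1"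
  shows "inj_on (mat_app (\<lambda>i j. fps_nth f (i + (j + off))) A A) (vecs A)"
proof (rule inj_on_mat_app_pivot[where p="\<lambda>i. A - 1 - i" and c=id])
  fix i assume "i < A"
  then have "i + (A - 1 - i + off) = k" using assms(3) by auto
  then show "fps_nth f (i + (A - 1 - i + off)) \<noteq> 0" using lead by simp
next
  fix j assume "j < A"
  then show "\<exists>i<A. A - 1 - i = j" by (intro exI[of _ "A - 1 - j"]) auto
next
  fix i j assume "i < A" "j < A" "fps_nth f (i + (j + off)) \<noteq> 0" "j \<noteq> A - 1 - i"
  then have "k \<le> i + (j + off)" using zeros by (meson not_le)
  then show "id (A - 1 - i) < id j" using \<open>j \<noteq> A - 1 - i\<close> assms(3) by simp
qed

lemma card_hankel_image_reduce:
  fixes f :: "'a::{finite,field} fps"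
  assumes zeros: "\<And>e. e < k \<Longrightarrow> fps_nth f e = 0" and lead: "fps_nth f k \<noteq> 0"
    and "k < A" "k < B"
  shows "card (mat_image (\<lambda>i j. fps_nth f (i + j)) A B) = card (UNIV :: 'a set) ^ (k + 1) *
    card (mat_image (\<lambda>i j. - fps_nth (inverse (fps_shift k f)) (i + j + k + 2)) (A - (k + 1)) (B - (k + 1)))"
proof -
  define u where "u = inverse (fps_shift k f)"
  have shift_inverse: "fps_shift k f * u = 1"
    unfolding u_def by (rule inverse_mult_eq_1') (simp add: lead)
  have u0: "fps_nth u 0 \<noteq> 0" by (rule inverse_nth_0_nonzero[OF zeros shift_inverse])
  let ?H = "\<lambda>i j. fps_nth f (i + j)"
  let ?P = "hankel_reducer u k"
  let ?Q = "\<lambda>j b. hankel_reducer u k b j"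
  let ?D = "\<lambda>i j. - fps_nth u (i + j + k + 2)"
  have inj_P: "inj_on (mat_app ?P A A) (vecs A)"
    by (rule inj_on_mat_app_lower_triangular) (simp_all add: hankel_reducer_diag u0 hankel_reducer_above)
  have inj_Q: "inj_on (mat_app ?Q B B) (vecs B)"
    by (rule inj_on_mat_app_upper_triangular) (simp_all add: hankel_reducer_diag u0 hankel_reducer_above)
  have "mat_image (mat_comp ?H ?Q B) A B = mat_image ?H A B"
    unfolding mat_image_mat_comp by (simp only: mat_image_def mat_app_square_surj[OF inj_Q])
  then have "mat_image (mat_comp ?P (mat_comp ?H ?Q B) A) A B = mat_app ?P A A ` mat_image ?H A B"
    by (simp add: mat_image_mat_comp)
  then have "card (mat_image ?H A B) = card (mat_image (mat_comp ?P (mat_comp ?H ?Q B) A) A B)"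
    using card_image[OF inj_on_subset[OF inj_P mat_image_subset_vecs]] by simp
  also have "mat_image (mat_comp ?P (mat_comp ?H ?Q B) A) A B = mat_image (block_diag (k + 1) ?H ?D) A B"
  proof (rule mat_image_cong)
    fix a b assume "a < A" "b < B"
    moreover have "k < a \<Longrightarrow> k < b \<Longrightarrow> a + b - k = (a - (k + 1)) + (b - (k + 1)) + k + 2" by arith
    ultimately show "mat_comp ?P (mat_comp ?H ?Q B) A a b = block_diag (k + 1) ?H ?D a b"
      using hankel_reducer_entry[OF zeros shift_inverse] by (auto simp: mat_comp_def block_diag_def)
  qed
  also have "\<dots> = mat_image (block_diag (k + 1) ?H ?D) ((k + 1) + (A - (k + 1))) ((k + 1) + (B - (k + 1)))"
    using assms by simp
  also have "card \<dots> = card (UNIV :: 'a set) ^ (k + 1) * card (mat_image ?D (A - (k + 1)) (B - (k + 1)))"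
    using inj_on_hankel_square[OF zeros lead, of 0 "k + 1"] by (intro card_mat_image_block_diag) simp
  finally show ?thesis by (simp add: u_def)
qed

lemma hankel_image_full:
  fixes f :: "'a::{finite,field} fps"
  assumes zeros: "\<And>e. e < k \<Longrightarrow> fps_nth f e = 0" and lead: "fps_nth f k \<noteq> 0"
    and "A - 1 \<le> k" "k < B"
  shows "mat_image (\<lambda>i j. fps_nth f (i + j)) A B = vecs A"
proof
  show "mat_image (\<lambda>i j. fps_nth f (i + j)) A B \<subseteq> vecs A" by (rule mat_image_subset_vecs)
  show "vecs A \<subseteq> mat_image (\<lambda>i j. fps_nth f (i + j)) A B"
  proof (cases "A = 0")
    case True then show ?thesis
      by (auto simp: vecs_def mat_image_def mat_app_def fun_eq_iff intro!: image_eqI[where x="\<lambda>_. 0"])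
  next
    case False
    define off where "off = k + 1 - A"
    have off: "off + A = k + 1" "off + A \<le> B" using assms False by (auto simp: off_def)
    show ?thesis
    proof
      fix w :: "nat \<Rightarrow> 'a" assume "w \<in> vecs A"
      then obtain v where v: "v \<in> vecs A" "w = mat_app (\<lambda>i j. fps_nth f (i + (j + off))) A A v"
        using mat_app_square_surj[OF inj_on_hankel_square[OF zeros lead off(1)]] by blast
      have "(\<lambda>j. if off \<le> j then v (j - off) else 0) \<in> vecs B"
        using v(1) off by (auto simp: vecs_def)
      moreover have "w = mat_app (\<lambda>i j. fps_nth f (i + j)) A B (\<lambda>j. if off \<le> j then v (j - off) else 0)"
        using mat_app_drop_cols[OF off(2) v(1)] v(2) by simp
      ultimately show "w \<in> mat_image (\<lambda>i j. fps_nth f (i + j)) A B" by (auto simp: mat_image_def)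
    qed
  qed
qed

lemma card_hankel_image_leading_zeros:
  fixes f :: "'a::{finite,field} fps"
  assumes zeros: "\<And>e. e < k \<Longrightarrow> fps_nth f e = 0" and lead: "fps_nth f k \<noteq> 0"
    and "0 < A" "A \<le> B" "A - 1 \<le> k" "k \<le> A + B - 2"
  shows "card (mat_image (\<lambda>i j. fps_nth f (i + j)) A B) = card (UNIV :: 'a set) ^ min A (A + B - 1 - k)"
proof (cases "k < B")
  case True
  then have "min A (A + B - 1 - k) = A" by presburger
  then show ?thesis by (simp add: hankel_image_full[OF zeros lead assms(5) True] card_vecs)
next
  case False
  define z where "z = k + 1 - B"
  define A' where "A' = A + B - 1 - k"
  have kAB: "k + 2 \<le> A + B" using assms(3,4,6) by arith
  have zB: "z + (B - 1) = k" and "1 \<le> z" using False assms(3,4) unfolding z_def by arith+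
  have A'_eq: "A' + (k + 1) = A + B" using kAB unfolding A'_def by arith
  have A: "A = z + A'" "A' < A" "0 < A'" using zB A'_eq kAB \<open>1 \<le> z\<close> assms(3,4) by linarith+
  have "card (mat_image (\<lambda>i j. fps_nth f (i + j)) (z + A') B) =
      card (mat_image (\<lambda>i j. fps_nth f (i + z + j)) A' B)"
  proof (rule card_mat_image_drop_zero_rows)
    fix i j assume "i < z" "j < B"
    then have "i + j < k" using zB by linarith
    then show "fps_nth f (i + j) = 0" by (rule zeros)
  qed
  also have "(\<lambda>i j. fps_nth f (i + z + j)) = (\<lambda>i j. fps_nth (fps_shift z f) (i + j))"
    by (simp add: add_ac)
  also have "mat_image (\<lambda>i j. fps_nth (fps_shift z f) (i + j)) A' B = vecs A'"
  proof (rule hankel_image_full)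
    fix e assume "e < B - 1"
    then have "e + z < k" using zB by linarith
    then show "fps_nth (fps_shift z f) e = 0" by (simp add: zeros)
  next
    show "fps_nth (fps_shift z f) (B - 1) \<noteq> 0" using lead zB by (simp add: add.commute)
  next
    show "A' - 1 \<le> B - 1" "B - 1 < B" using A assms(4) by linarith+
  qed
  finally have "card (mat_image (\<lambda>i j. fps_nth f (i + j)) (z + A') B) = card (vecs A' :: (nat \<Rightarrow> 'a) set)" .
  moreover have "min A (A + B - 1 - k) = A'" using A(2) unfolding A'_def[symmetric] by simp
  ultimately show ?thesis using A(1) by (simp add: card_vecs)
qed

section \<open>Truncated power series inversion\<close>

definition fps_of_list :: "'a::zero list \<Rightarrow> 'a fps" where
  "fps_of_list w = Abs_fps (\<lambda>e. if e < length w then w ! e else 0)"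

definition list_inverse :: "'a::field list \<Rightarrow> 'a list" where
  "list_inverse w = map (fps_nth (inverse (fps_of_list w))) [0..<length w]"

text \<open>Only used for \<open>l > 0\<close>: for \<open>l = 0\<close> the head \<open>[] ! 0\<close> is an unspecified value.\<close>

definition nonzero_head_lists :: "nat \<Rightarrow> 'a::zero list set" where
  "nonzero_head_lists l = {w. length w = l \<and> w ! 0 \<noteq> 0}"

lemma fps_nth_fps_of_list: "fps_nth (fps_of_list w) e = (if e < length w then w ! e else 0)"
  by (simp add: fps_of_list_def)

lemma fps_inverse_nth_eq:
  fixes f g :: "'a::field fps"
  assumes "\<And>i. i < n \<Longrightarrow> fps_nth f i = fps_nth g i" "fps_nth f 0 \<noteq> 0" "e < n"
  shows "fps_nth (inverse f) e = fps_nth (inverse g) e"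
proof -
  have "fps_cutoff n f = fps_cutoff n g" using assms(1) by (simp add: fps_cutoff_eq_fps_cutoff_iff)
  moreover have "fps_nth g 0 \<noteq> 0" using assms by (metis le_less_trans zero_le)
  ultimately have "fps_cutoff n (inverse f) = fps_cutoff n (inverse g)"
    using fps_cutoff_inverse[of f n] fps_cutoff_inverse[of g n] assms(2) by simp
  then show ?thesis using assms(3) by (metis fps_cutoff_nth)
qed

lemma length_list_inverse [simp]: "length (list_inverse w) = length w"
  by (simp add: list_inverse_def)

lemma nth_list_inverse: "e < length w \<Longrightarrow> list_inverse w ! e = fps_nth (inverse (fps_of_list w)) e"
  by (simp add: list_inverse_def)

lemma list_inverse_nonzero_head: "w \<in> nonzero_head_lists l \<Longrightarrow> 0 < l \<Longrightarrow> list_inverse w \<in> nonzero_head_lists l"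
  by (auto simp: nonzero_head_lists_def nth_list_inverse fps_nth_fps_of_list)

lemma list_inverse_list_inverse:
  assumes "w \<in> nonzero_head_lists l" "0 < l"
  shows "list_inverse (list_inverse w) = w"
proof (rule nth_equalityI)
  show "length (list_inverse (list_inverse w)) = length w" by simp
  fix e assume e: "e < length (list_inverse (list_inverse w))"
  have head: "fps_nth (fps_of_list w) 0 \<noteq> 0" using assms by (simp add: nonzero_head_lists_def fps_nth_fps_of_list)
  have "list_inverse (list_inverse w) ! e = fps_nth (inverse (fps_of_list (list_inverse w))) e"
    using e by (simp add: nth_list_inverse)
  also have "\<dots> = fps_nth (inverse (inverse (fps_of_list w))) e"
    using e head by (intro fps_inverse_nth_eq[where n="length w"]) (auto simp: fps_nth_fps_of_list nth_list_inverse)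
  also have "\<dots> = w ! e" using e head by (simp add: fps_nth_fps_of_list)
  finally show "list_inverse (list_inverse w) ! e = w ! e" .
qed

lemma bij_betw_list_inverse: "0 < l \<Longrightarrow> bij_betw list_inverse (nonzero_head_lists l) (nonzero_head_lists l)"
  by (rule bij_betw_byWitness[where f'=list_inverse])
    (auto simp: list_inverse_list_inverse list_inverse_nonzero_head)

lemma card_lists_length: "card {w :: 'a::finite list. length w = l} = card (UNIV :: 'a set) ^ l"
  using card_lists_length_eq[of "UNIV :: 'a set" l] by simp

lemma card_nonzero_head_lists:
  "card (nonzero_head_lists (Suc l) :: 'a::{finite,zero} list set) = (card (UNIV :: 'a set) - 1) * card (UNIV :: 'a set) ^ l"
proof -
  have "nonzero_head_lists (Suc l) = (\<lambda>(c, t). c # t) ` ((UNIV - {0::'a}) \<times> {t. length t = l})"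
    by (auto simp: nonzero_head_lists_def image_iff length_Suc_conv)
  moreover have "inj_on (\<lambda>(c, t). c # t) ((UNIV - {0::'a}) \<times> {t. length t = l})"
    by (auto simp: inj_on_def)
  ultimately show ?thesis
    by (simp add: card_image card_cartesian_product card_lists_length card_Diff_singleton)
qed

lemma bij_betw_take_drop_nonzero_head:
  assumes "0 < j"
  shows "bij_betw (\<lambda>w. (take j w, drop j w)) (nonzero_head_lists (j + l)) (nonzero_head_lists j \<times> {y. length y = l})"
  by (rule bij_betw_byWitness[where f'="\<lambda>(p, y). p @ y"]) (use assms in \<open>auto simp: nonzero_head_lists_def nth_append\<close>)

section \<open>Ranks of Hankel matrices of tuples\<close>

definition first_nonzero_lists :: "nat \<Rightarrow> nat \<Rightarrow> 'a::zero list set" where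
  "first_nonzero_lists l k = {x. length x = l \<and> (\<forall>e<k. x ! e = 0) \<and> x ! k \<noteq> 0}"

definition hankel_tail :: "nat \<Rightarrow> 'a::field list \<Rightarrow> 'a list" where
  "hankel_tail k x = map uminus (drop (k + 2) (list_inverse (drop k x)))"

lemma two_le_card_UNIV: "2 \<le> card (UNIV :: 'a::{finite,field} set)"
proof -
  have "card {0::'a, 1} \<le> card (UNIV :: 'a set)" by (rule card_mono) auto
  then show ?thesis by simp
qed

lemma card_UNIV_power_inject:
  "card (UNIV :: 'a::{finite,field} set) ^ a = card (UNIV :: 'a set) ^ b \<Longrightarrow> a = b"
  using two_le_card_UNIV[where 'a='a] by (simp add: power_inject_exp)

lemma card_hankel_image:
  fixes x :: "'a::{finite,field} list"
  assumes "length x = m + n + 1"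
  shows "card (mat_image (\<lambda>i j. fps_nth (fps_of_list x) (i + j)) (m + 1) (n + 1)) =
    card (UNIV :: 'a set) ^ mrank (hankel m n x)"
proof -
  have "mat_image (\<lambda>i j. fps_nth (fps_of_list x) (i + j)) (m + 1) (n + 1) =
      mat_image (\<lambda>i j. x ! (i + j)) (m + 1) (n + 1)"
    using assms by (intro mat_image_cong) (simp add: fps_nth_fps_of_list)
  then show ?thesis by (simp add: card_mat_image_mrank hankel_def)
qed

lemma fps_of_list_first_nonzero:
  assumes "x \<in> first_nonzero_lists l k" "k < l"
  shows "\<And>e. e < k \<Longrightarrow> fps_nth (fps_of_list x) e = 0" and "fps_nth (fps_of_list x) k \<noteq> 0"
  using assms by (auto simp: first_nonzero_lists_def fps_nth_fps_of_list)

lemma fps_shift_fps_of_list: "fps_shift k (fps_of_list x) = fps_of_list (drop k x)"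
  by (rule fps_ext) (auto simp: fps_nth_fps_of_list add.commute)

lemma fps_nth_hankel_tail:
  assumes "e < length (hankel_tail k x)"
  shows "fps_nth (fps_of_list (hankel_tail k x)) e = - fps_nth (inverse (fps_shift k (fps_of_list x))) (e + k + 2)"
proof -
  have "fps_nth (fps_of_list (hankel_tail k x)) e = - list_inverse (drop k x) ! (k + 2 + e)"
    using assms by (simp add: fps_nth_fps_of_list hankel_tail_def)
  also have "\<dots> = - fps_nth (inverse (fps_shift k (fps_of_list x))) (k + 2 + e)"
    using assms by (simp add: hankel_tail_def nth_list_inverse fps_shift_fps_of_list)
  also have "k + 2 + e = e + k + 2" by simp
  finally show ?thesis .
qed

lemma mrank_hankel_tail:
  fixes x :: "'a::{finite,field} list"
  assumes x: "x \<in> first_nonzero_lists (m + n + 1) k" and "k < m" "m \<le> n"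
  shows "mrank (hankel m n x) = k + 1 + mrank (hankel (m - k - 1) (n - k - 1) (hankel_tail k x))"
proof -
  let ?f = "fps_of_list x"
  have len: "length x = m + n + 1" using x by (simp add: first_nonzero_lists_def)
  have len_tail: "length (hankel_tail k x) = (m - k - 1) + (n - k - 1) + 1"
    using assms(2,3) by (simp add: hankel_tail_def len)
  have dims: "m + 1 - (k + 1) = (m - k - 1) + 1" "n + 1 - (k + 1) = (n - k - 1) + 1" using assms(2,3) by simp_all
  have "k < m + n + 1" "k < m + 1" "k < n + 1" using assms(2,3) by simp_all
  note reduce = card_hankel_image_reduce[OF fps_of_list_first_nonzero[OF x this(1)] this(2,3), unfolded dims]
  have "card (mat_image (\<lambda>i j. fps_nth ?f (i + j)) (m + 1) (n + 1)) = card (UNIV :: 'a set) ^ (k + 1) *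
      card (mat_image (\<lambda>i j. - fps_nth (inverse (fps_shift k ?f)) (i + j + k + 2)) ((m - k - 1) + 1) ((n - k - 1) + 1))"
    by (rule reduce)
  also have "mat_image (\<lambda>i j. - fps_nth (inverse (fps_shift k ?f)) (i + j + k + 2)) ((m - k - 1) + 1) ((n - k - 1) + 1) =
      mat_image (\<lambda>i j. fps_nth (fps_of_list (hankel_tail k x)) (i + j)) ((m - k - 1) + 1) ((n - k - 1) + 1)"
  proof (rule mat_image_cong)
    fix i j assume "i < (m - k - 1) + 1" "j < (n - k - 1) + 1"
    then have "i + j < length (hankel_tail k x)" using len_tail by linarith
    then show "- fps_nth (inverse (fps_shift k ?f)) (i + j + k + 2) = fps_nth (fps_of_list (hankel_tail k x)) (i + j)"
      by (rule fps_nth_hankel_tail[symmetric])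
  qed
  also have "card \<dots> = card (UNIV :: 'a set) ^ mrank (hankel (m - k - 1) (n - k - 1) (hankel_tail k x))"
    by (rule card_hankel_image[OF len_tail])
  also have "card (UNIV :: 'a set) ^ (k + 1) * card (UNIV :: 'a set) ^ mrank (hankel (m - k - 1) (n - k - 1) (hankel_tail k x)) =
      card (UNIV :: 'a set) ^ (k + 1 + mrank (hankel (m - k - 1) (n - k - 1) (hankel_tail k x)))"
    by (rule power_add[symmetric])
  finally have "card (UNIV :: 'a set) ^ mrank (hankel m n x) =
      card (UNIV :: 'a set) ^ (k + 1 + mrank (hankel (m - k - 1) (n - k - 1) (hankel_tail k x)))"
    unfolding card_hankel_image[OF len] .
  then show ?thesis by (rule card_UNIV_power_inject)
qed

lemma mrank_hankel_leading_zeros: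
  fixes x :: "'a::{finite,field} list"
  assumes x: "x \<in> first_nonzero_lists (m + n + 1) k" and "m \<le> k" "k \<le> m + n" "m \<le> n"
  shows "mrank (hankel m n x) = min (m + 1) (m + n + 1 - k)"
proof -
  have len: "length x = m + n + 1" using x by (simp add: first_nonzero_lists_def)
  have "card (mat_image (\<lambda>i j. fps_nth (fps_of_list x) (i + j)) (m + 1) (n + 1)) =
      card (UNIV :: 'a set) ^ min (m + 1) (m + 1 + (n + 1) - 1 - k)"
    using assms by (intro card_hankel_image_leading_zeros fps_of_list_first_nonzero[OF x]) auto
  also have "m + 1 + (n + 1) - 1 - k = m + n + 1 - k" by simp
  finally have "card (UNIV :: 'a set) ^ mrank (hankel m n x) = card (UNIV :: 'a set) ^ min (m + 1) (m + n + 1 - k)"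
    by (simp only: card_hankel_image[OF len])
  then show ?thesis by (rule card_UNIV_power_inject)
qed

lemma mrank_hankel_zero: "mrank (hankel m n (replicate (m + n + 1) (0::'a::{finite,field}))) = 0"
proof -
  let ?z = "replicate (m + n + 1) (0::'a)"
  have "card (UNIV :: 'a set) ^ mrank (hankel m n ?z) =
      card (mat_image (\<lambda>i j. fps_nth (fps_of_list ?z) (i + j)) (m + 1) (n + 1))"
    by (rule card_hankel_image[symmetric]) simp
  also have "mat_image (\<lambda>i j. fps_nth (fps_of_list ?z) (i + j)) (m + 1) (n + 1) = {\<lambda>_. 0}"
    by (rule mat_image_zero) (simp add: fps_nth_fps_of_list nth_replicate del: replicate.simps)
  finally have "card (UNIV :: 'a set) ^ mrank (hankel m n ?z) = card (UNIV :: 'a set) ^ 0" by simp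
  then show ?thesis by (rule card_UNIV_power_inject)
qed

lemma bij_betw_drop_first_nonzero:
  assumes "0 < l"
  shows "bij_betw (drop k) (first_nonzero_lists (k + l) k) (nonzero_head_lists l)"
proof (rule bij_betw_byWitness[where f'="\<lambda>w. replicate k 0 @ w"])
  show "\<forall>x\<in>first_nonzero_lists (k + l) k. replicate k 0 @ drop k x = x"
    by (auto simp: first_nonzero_lists_def nth_append intro!: nth_equalityI)
qed (use assms in \<open>auto simp: first_nonzero_lists_def nonzero_head_lists_def nth_append\<close>)

lemma card_first_nonzero_lists:
  "card (first_nonzero_lists (k + Suc l) k :: 'a::{finite,zero} list set) =
    (card (UNIV :: 'a set) - 1) * card (UNIV :: 'a set) ^ l"
  using bij_betw_same_card[OF bij_betw_drop_first_nonzero[of "Suc l" k, where 'a='a]] card_nonzero_head_lists[where 'a='a] by simp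

lemma bij_betw_hankel_tail:
  "bij_betw (\<lambda>x. (take (k + 2) (list_inverse (drop k x)), hankel_tail k x))
     (first_nonzero_lists (k + (k + 2 + l)) k :: 'a::field list set)
     (nonzero_head_lists (k + 2) \<times> {y. length y = l})"
proof -
  have uminus: "bij_betw (map uminus) {y :: 'a list. length y = l} {y. length y = l}"
    by (rule bij_betw_byWitness[where f'="map uminus"]) (auto simp: comp_def)
  have drop: "bij_betw (drop k) (first_nonzero_lists (k + (k + 2 + l)) k :: 'a list set) (nonzero_head_lists (k + 2 + l))"
    by (rule bij_betw_drop_first_nonzero) simp
  have inverse: "bij_betw list_inverse (nonzero_head_lists (k + 2 + l) :: 'a list set) (nonzero_head_lists (k + 2 + l))"
    by (rule bij_betw_list_inverse) simp
  have split: "bij_betw (\<lambda>w. (take (k + 2) w, drop (k + 2) w)) (nonzero_head_lists (k + 2 + l) :: 'a list set)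
      (nonzero_head_lists (k + 2) \<times> {y. length y = l})"
    by (rule bij_betw_take_drop_nonzero_head) simp
  have "bij_betw (map_prod id (map uminus) \<circ> ((\<lambda>w. (take (k + 2) w, drop (k + 2) w)) \<circ> (list_inverse \<circ> drop k)))
     (first_nonzero_lists (k + (k + 2 + l)) k :: 'a list set) (nonzero_head_lists (k + 2) \<times> {y. length y = l})"
    by (intro bij_betw_trans[OF bij_betw_trans[OF bij_betw_trans[OF drop inverse] split]]
        bij_betw_map_prod[OF bij_betw_id uminus])
  then show ?thesis by (simp add: comp_def hankel_tail_def)
qed

lemma card_first_nonzero_mrank:
  assumes "k < m" "m \<le> n"
  shows "card {x \<in> (first_nonzero_lists (m + n + 1) k :: 'a::{finite,field} list set). mrank (hankel m n x) = k + 1 + r} =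
    (card (UNIV :: 'a set) - 1) * card (UNIV :: 'a set) ^ (k + 1) *
    card {y :: 'a list. length y = (m - k - 1) + (n - k - 1) + 1 \<and> mrank (hankel (m - k - 1) (n - k - 1) y) = r}"
proof -
  let ?l = "(m - k - 1) + (n - k - 1) + 1"
  have N: "m + n + 1 = k + (k + 2 + ?l)" using assms by simp
  have "bij_betw (\<lambda>x. (take (k + 2) (list_inverse (drop k x)), hankel_tail k x))
     {x \<in> (first_nonzero_lists (m + n + 1) k :: 'a list set). mrank (hankel m n x) = k + 1 + r}
     {z \<in> (nonzero_head_lists (k + 2) :: 'a list set) \<times> {y :: 'a list. length y = ?l}. mrank (hankel (m - k - 1) (n - k - 1) (snd z)) = r}"
    unfolding N
  proof (rule bij_betw_Collect[OF bij_betw_hankel_tail])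
    fix x assume "x \<in> (first_nonzero_lists (k + (k + 2 + ?l)) k :: 'a list set)"
    then have "x \<in> first_nonzero_lists (m + n + 1) k" unfolding N .
    from mrank_hankel_tail[OF this assms] show "mrank (hankel (m - k - 1) (n - k - 1) (snd (take (k + 2) (list_inverse (drop k x)), hankel_tail k x))) = r
        \<longleftrightarrow> mrank (hankel m n x) = k + 1 + r"
      by simp
  qed
  then have "card {x \<in> (first_nonzero_lists (m + n + 1) k :: 'a list set). mrank (hankel m n x) = k + 1 + r} =
      card {z \<in> (nonzero_head_lists (k + 2) :: 'a list set) \<times> {y :: 'a list. length y = ?l}. mrank (hankel (m - k - 1) (n - k - 1) (snd z)) = r}"
    by (rule bij_betw_same_card)
  also have "{z \<in> (nonzero_head_lists (k + 2) :: 'a list set) \<times> {y :: 'a list. length y = ?l}. mrank (hankel (m - k - 1) (n - k - 1) (snd z)) = r} =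
      (nonzero_head_lists (k + 2) :: 'a list set) \<times> {y :: 'a list. length y = ?l \<and> mrank (hankel (m - k - 1) (n - k - 1) y) = r}"
    by auto
  also have "card ((nonzero_head_lists (k + 2) :: 'a list set) \<times> {y :: 'a list. length y = ?l \<and> mrank (hankel (m - k - 1) (n - k - 1) y) = r}) =
      card (nonzero_head_lists (k + 2) :: 'a list set) *
      card {y :: 'a list. length y = ?l \<and> mrank (hankel (m - k - 1) (n - k - 1) y) = r}"
    by (rule card_cartesian_product)
  also have "card (nonzero_head_lists (k + 2) :: 'a list set) = (card (UNIV :: 'a set) - 1) * card (UNIV :: 'a set) ^ (k + 1)"
    using card_nonzero_head_lists[of "k + 1", where 'a='a] by simp
  finally show ?thesis .
qed

section \<open>The counting recursion\<close>

definition hankel_rank_count :: "nat \<Rightarrow> nat \<Rightarrow> nat \<Rightarrow> nat \<Rightarrow> nat" where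
  "hankel_rank_count q m n r =
    (if r = 0 then 1
     else if r \<le> m then q ^ (2 * r - 2) * (q ^ 2 - 1)
     else if r = m + 1 then q ^ (2 * r - 2) * (q ^ (n - m + 1) - 1)
     else 0)"

lemma geometric_sum_nat: "1 \<le> (q::nat) \<Longrightarrow> (q - 1) * (\<Sum>i<t. q ^ (a + i)) + q ^ a = q ^ (a + t)"
proof (induction t)
  case (Suc t)
  have "(q - 1) * (\<Sum>i<Suc t. q ^ (a + i)) + q ^ a = ((q - 1) * (\<Sum>i<t. q ^ (a + i)) + q ^ a) + (q - 1) * q ^ (a + t)"
    by (simp add: algebra_simps)
  also have "\<dots> = q ^ (a + t) + (q - 1) * q ^ (a + t)" using Suc by simp
  also have "\<dots> = q * q ^ (a + t)" using Suc.prems by (simp add: algebra_simps)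
  finally show ?case by simp
qed simp

lemma sum_power_reverse: "(\<Sum>k<t. q ^ (2 * t - k - 1)) = (\<Sum>i<t. (q::nat) ^ (t + i))"
proof -
  have "(\<Sum>k<t. q ^ (2 * t - k - 1)) = (\<Sum>k<t. (\<lambda>i. q ^ (t + i)) (t - Suc k))"
    by (intro sum.cong) (auto simp: mult_2)
  also have "\<dots> = (\<Sum>i<t. q ^ (t + i))" by (rule sum.nat_diff_reindex)
  finally show ?thesis .
qed

lemma geometric_sum_reverse: "1 \<le> (q::nat) \<Longrightarrow> (q - 1) * (\<Sum>k<t. q ^ (2 * t - k - 1)) + q ^ t = q ^ (2 * t)"
  using geometric_sum_nat[of q t t] unfolding sum_power_reverse by (simp add: mult_2)

text \<open>Naming in the recursion: \<open>low\<close> sums run over first nonzero positions \<open>k < m\<close>,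
  \<open>high\<close> sums over \<open>k \<ge> m\<close>; \<open>middle\<close> is the case \<open>0 < r \<le> m\<close>, \<open>top\<close> the case \<open>r = m + 1\<close>.\<close>

lemma sum_hankel_count_low_middle:
  fixes q :: nat
  assumes "t < m"
  shows "(\<Sum>k<m. if k + 1 \<le> t + 1 then (q - 1) * q ^ (k + 1) * hankel_rank_count q (m - k - 1) (n - k - 1) (t + 1 - k - 1) else 0)
    = (q - 1) * q ^ (t + 1) + (q - 1) * (q ^ 2 - 1) * (\<Sum>k<t. q ^ (2 * t - k - 1))"
proof -
  have "(\<Sum>k<m. if k + 1 \<le> t + 1 then (q - 1) * q ^ (k + 1) * hankel_rank_count q (m - k - 1) (n - k - 1) (t + 1 - k - 1) else 0)
    = (\<Sum>k<t + 1. (q - 1) * q ^ (k + 1) * hankel_rank_count q (m - k - 1) (n - k - 1) (t - k))"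
    using assms by (intro sum.mono_neutral_cong_right) auto
  also have "\<dots> = (\<Sum>k<t. (q - 1) * q ^ (k + 1) * hankel_rank_count q (m - k - 1) (n - k - 1) (t - k)) + (q - 1) * q ^ (t + 1)"
    by (simp add: hankel_rank_count_def)
  also have "(\<Sum>k<t. (q - 1) * q ^ (k + 1) * hankel_rank_count q (m - k - 1) (n - k - 1) (t - k)) =
      (\<Sum>k<t. (q - 1) * (q ^ 2 - 1) * q ^ (2 * t - k - 1))"
  proof (rule sum.cong[OF refl])
    fix k assume k: "k \<in> {..<t}"
    then have "hankel_rank_count q (m - k - 1) (n - k - 1) (t - k) = q ^ (2 * (t - k) - 2) * (q ^ 2 - 1)"
      using assms by (auto simp: hankel_rank_count_def)
    moreover have "k + 1 + (2 * (t - k) - 2) = 2 * t - k - 1" using k by auto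
    moreover have "(q - 1) * q ^ (k + 1) * (q ^ (2 * (t - k) - 2) * (q ^ 2 - 1)) =
        (q - 1) * (q ^ 2 - 1) * (q ^ (k + 1) * q ^ (2 * (t - k) - 2))"
      by (simp only: mult_ac)
    ultimately show "(q - 1) * q ^ (k + 1) * hankel_rank_count q (m - k - 1) (n - k - 1) (t - k) =
        (q - 1) * (q ^ 2 - 1) * q ^ (2 * t - k - 1)"
      by (simp only: power_add[symmetric])
  qed
  also have "\<dots> = (q - 1) * (q ^ 2 - 1) * (\<Sum>k<t. q ^ (2 * t - k - 1))" by (simp add: sum_distrib_left)
  finally show ?thesis by simp
qed

lemma sum_hankel_count_high_middle:
  fixes q :: nat
  assumes "t < m" "m \<le> n"
  shows "(\<Sum>k\<in>{m..m + n}. if t + 1 = min (m + 1) (m + n + 1 - k) then (q - 1) * q ^ (m + n - k) else 0) = (q - 1) * q ^ t"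
proof -
  have "(\<Sum>k\<in>{m..m + n}. if t + 1 = min (m + 1) (m + n + 1 - k) then (q - 1) * q ^ (m + n - k) else 0)
    = (\<Sum>k\<in>{m..m + n}. if k = m + n - t then (q - 1) * q ^ (m + n - k) else 0)"
    using assms by (intro sum.cong) auto
  also have "\<dots> = (q - 1) * q ^ (m + n - (m + n - t))"
  proof -
    have "m + n - t \<in> {m..m + n}" using assms by auto
    then show ?thesis by (simp only: sum.delta finite_atLeastAtMost if_True)
  qed
  finally show ?thesis using assms by simp
qed

lemma hankel_rank_count_rec_middle:
  fixes q :: nat
  assumes "1 \<le> q" "t < m" "m \<le> n"
  shows "(\<Sum>k<m. if k + 1 \<le> t + 1 then (q - 1) * q ^ (k + 1) * hankel_rank_count q (m - k - 1) (n - k - 1) (t + 1 - k - 1) else 0)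
    + (\<Sum>k\<in>{m..m + n}. if t + 1 = min (m + 1) (m + n + 1 - k) then (q - 1) * q ^ (m + n - k) else 0)
    = hankel_rank_count q m n (t + 1)"
proof -
  define g where "g = (\<Sum>k<t. q ^ (2 * t - k - 1))"
  have G: "(int q - 1) * int g + int q ^ t = int q ^ (2 * t)"
    using arg_cong[OF geometric_sum_reverse[OF assms(1), of t, folded g_def], of int] assms(1)
    by (simp add: of_nat_diff)
  have "int ((q - 1) * q ^ (t + 1) + (q - 1) * (q ^ 2 - 1) * g + (q - 1) * q ^ t)
      = (int q - 1) * int q ^ (t + 1) + (int q ^ 2 - 1) * ((int q - 1) * int g) + (int q - 1) * int q ^ t"
    using assms(1) by (simp add: of_nat_diff mult_ac)
  also have "\<dots> = (int q - 1) * int q ^ (t + 1) + (int q ^ 2 - 1) * (int q ^ (2 * t) - int q ^ t) + (int q - 1) * int q ^ t"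
    using G by (simp add: eq_diff_eq)
  also have "\<dots> = int q ^ (2 * t) * (int q ^ 2 - 1)" by (simp add: algebra_simps power_add power2_eq_square)
  also have "\<dots> = int (hankel_rank_count q m n (t + 1))"
    using assms by (simp add: hankel_rank_count_def of_nat_diff)
  finally have "(q - 1) * q ^ (t + 1) + (q - 1) * (q ^ 2 - 1) * g + (q - 1) * q ^ t = hankel_rank_count q m n (t + 1)"
    by (simp only: of_nat_eq_iff)
  then show ?thesis
    unfolding sum_hankel_count_low_middle[OF assms(2)] sum_hankel_count_high_middle[OF assms(2,3)] g_def .
qed

lemma sum_hankel_count_low_top:
  fixes q :: nat
  assumes "m \<le> n"
  shows "(\<Sum>k<m. if k + 1 \<le> m + 1 then (q - 1) * q ^ (k + 1) * hankel_rank_count q (m - k - 1) (n - k - 1) (m + 1 - k - 1) else 0)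
    = (q - 1) * (q ^ (n - m + 1) - 1) * (\<Sum>k<m. q ^ (2 * m - k - 1))"
proof -
  have "(\<Sum>k<m. if k + 1 \<le> m + 1 then (q - 1) * q ^ (k + 1) * hankel_rank_count q (m - k - 1) (n - k - 1) (m + 1 - k - 1) else 0)
      = (\<Sum>k<m. (q - 1) * (q ^ (n - m + 1) - 1) * q ^ (2 * m - k - 1))"
  proof (rule sum.cong[OF refl])
    fix k assume k: "k \<in> {..<m}"
    then have "hankel_rank_count q (m - k - 1) (n - k - 1) (m + 1 - k - 1) = q ^ (2 * (m - k) - 2) * (q ^ (n - m + 1) - 1)"
      using assms by (auto simp: hankel_rank_count_def)
    moreover have "k + 1 + (2 * (m - k) - 2) = 2 * m - k - 1" using k by auto
    moreover have "(q - 1) * q ^ (k + 1) * (q ^ (2 * (m - k) - 2) * (q ^ (n - m + 1) - 1)) =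
        (q - 1) * (q ^ (n - m + 1) - 1) * (q ^ (k + 1) * q ^ (2 * (m - k) - 2))"
      by (simp only: mult_ac)
    moreover have "k + 1 \<le> m + 1" using k by simp
    ultimately show "(if k + 1 \<le> m + 1 then (q - 1) * q ^ (k + 1) * hankel_rank_count q (m - k - 1) (n - k - 1) (m + 1 - k - 1) else 0) =
        (q - 1) * (q ^ (n - m + 1) - 1) * q ^ (2 * m - k - 1)"
      by (simp only: power_add[symmetric] if_True)
  qed
  then show ?thesis by (simp only: sum_distrib_left)
qed

lemma sum_hankel_count_high_top:
  fixes q :: nat
  assumes "m \<le> n"
  shows "(\<Sum>k\<in>{m..m + n}. if m + 1 = min (m + 1) (m + n + 1 - k) then (q - 1) * q ^ (m + n - k) else 0)
    = (q - 1) * (\<Sum>i<n - m + 1. q ^ (m + i))"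
proof -
  have "(\<Sum>k\<in>{m..m + n}. if m + 1 = min (m + 1) (m + n + 1 - k) then (q - 1) * q ^ (m + n - k) else 0)
      = (\<Sum>k\<in>{m..n}. (q - 1) * q ^ (m + n - k))"
    using assms by (intro sum.mono_neutral_cong_right) auto
  also have "\<dots> = (\<Sum>i<n - m + 1. (q - 1) * q ^ (m + i))"
    by (rule sum.reindex_bij_witness[where i="\<lambda>i. n - i" and j="\<lambda>k. n - k"]) (use assms in auto)
  also have "\<dots> = (q - 1) * (\<Sum>i<n - m + 1. q ^ (m + i))" by (simp only: sum_distrib_left)
  finally show ?thesis .
qed

lemma hankel_rank_count_rec_top:
  fixes q :: nat
  assumes "1 \<le> q" "m \<le> n"
  shows "(\<Sum>k<m. if k + 1 \<le> m + 1 then (q - 1) * q ^ (k + 1) * hankel_rank_count q (m - k - 1) (n - k - 1) (m + 1 - k - 1) else 0)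
    + (\<Sum>k\<in>{m..m + n}. if m + 1 = min (m + 1) (m + n + 1 - k) then (q - 1) * q ^ (m + n - k) else 0)
    = hankel_rank_count q m n (m + 1)"
proof -
  define P where "P = q ^ (n - m + 1)"
  define g where "g = (\<Sum>k<m. q ^ (2 * m - k - 1))"
  define h where "h = (\<Sum>i<n - m + 1. q ^ (m + i))"
  have G: "(int q - 1) * int g = int q ^ (2 * m) - int q ^ m"
    using arg_cong[OF geometric_sum_reverse[OF assms(1), of m, folded g_def], of int] assms(1)
    by (simp add: of_nat_diff eq_diff_eq)
  have "(q - 1) * h + q ^ m = q ^ m * P"
    unfolding h_def P_def power_add[symmetric] by (rule geometric_sum_nat[OF assms(1)])
  from arg_cong[OF this, of int] have H: "(int q - 1) * int h = int q ^ m * int P - int q ^ m"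
    using assms(1) by (simp add: of_nat_diff eq_diff_eq)
  have P: "1 \<le> P" using assms(1) by (simp add: P_def)
  have "int ((q - 1) * (P - 1) * g + (q - 1) * h) = (int P - 1) * ((int q - 1) * int g) + (int q - 1) * int h"
    using assms(1) P by (simp add: of_nat_diff mult_ac)
  also have "\<dots> = int q ^ (2 * m) * (int P - 1)" unfolding G H by (simp add: algebra_simps)
  also have "\<dots> = int (hankel_rank_count q m n (m + 1))"
    using P by (simp add: hankel_rank_count_def of_nat_diff P_def)
  finally have "(q - 1) * (P - 1) * g + (q - 1) * h = hankel_rank_count q m n (m + 1)"
    by (simp only: of_nat_eq_iff)
  then show ?thesis
    unfolding sum_hankel_count_low_top[OF assms(2)] sum_hankel_count_high_top[OF assms(2)] P_def g_def h_def .
qed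

lemma hankel_rank_count_rec:
  fixes q :: nat
  assumes "1 \<le> q" "m \<le> n"
  shows "hankel_rank_count q m n r = (if r = 0 then 1 else 0)
    + (\<Sum>k<m. if k + 1 \<le> r then (q - 1) * q ^ (k + 1) * hankel_rank_count q (m - k - 1) (n - k - 1) (r - k - 1) else 0)
    + (\<Sum>k\<in>{m..m + n}. if r = min (m + 1) (m + n + 1 - k) then (q - 1) * q ^ (m + n - k) else 0)"
proof -
  consider "r = 0" | "0 < r" "r \<le> m" | "r = m + 1" | "m + 1 < r" by linarith
  then show ?thesis
  proof cases
    case 1
    then show ?thesis by (auto simp: hankel_rank_count_def intro!: sum.neutral)
  next
    case 2
    define t where "t = r - 1"
    have t: "r = t + 1" "t < m" using 2 by (auto simp: t_def)
    show ?thesis unfolding t(1) using hankel_rank_count_rec_middle[OF assms(1) t(2) assms(2)] by simp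
  next
    case 3
    then show ?thesis using hankel_rank_count_rec_top[OF assms] by simp
  next
    case 4
    then show ?thesis by (auto simp: hankel_rank_count_def intro!: sum.neutral)
  qed
qed

lemma lists_first_nonzero_cases:
  fixes x :: "'a::zero list"
  assumes "length x = l"
  obtains "x = replicate l 0" | k where "k < l" "x \<in> first_nonzero_lists l k"
proof (cases "\<exists>e<l. x ! e \<noteq> 0")
  case False
  then have "x = replicate l 0" using assms by (intro nth_equalityI) auto
  then show ?thesis by (rule that(1))
next
  case True
  define k where "k = (LEAST e. x ! e \<noteq> 0)"
  obtain e where e: "e < l" "x ! e \<noteq> 0" using True by auto
  have "x ! k \<noteq> 0" unfolding k_def using e(2) by (rule LeastI)
  moreover have "k \<le> e" unfolding k_def using e(2) by (rule Least_le)
  moreover have "\<forall>e<k. x ! e = 0" unfolding k_def using not_less_Least by blast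
  ultimately show ?thesis using assms e by (intro that(2)[of k]) (auto simp: first_nonzero_lists_def)
qed

lemma card_lists_by_first_nonzero:
  fixes P :: "'a::{finite,zero} list \<Rightarrow> bool"
  shows "card {x. length x = l \<and> P x} =
    (if P (replicate l 0) then 1 else 0) + (\<Sum>k<l. card {x \<in> first_nonzero_lists l k. P x})"
proof -
  let ?Z = "{x \<in> {replicate l (0::'a)}. P x}"
  let ?U = "\<Union>k<l. {x \<in> (first_nonzero_lists l k :: 'a list set). P x}"
  have split: "{x. length x = l \<and> P x} = ?Z \<union> ?U"
  proof
    show "{x. length x = l \<and> P x} \<subseteq> ?Z \<union> ?U"
    proof
      fix x :: "'a list" assume "x \<in> {x. length x = l \<and> P x}"
      then have x: "length x = l" "P x" by simp_all
      from x(1) show "x \<in> ?Z \<union> ?U" by (cases rule: lists_first_nonzero_cases) (use x(2) in auto)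
    qed
  qed (auto simp: first_nonzero_lists_def)
  have fin: "finite {x \<in> (first_nonzero_lists l k :: 'a list set). P x}" for k
    by (rule finite_subset[of _ "{x. length x = l}"]) (use finite_lists_length_eq[of "UNIV :: 'a set" l] in \<open>auto simp: first_nonzero_lists_def\<close>)
  have disjoint: "?Z \<inter> ?U = {}" by (auto simp: first_nonzero_lists_def)
  have "?Z = (if P (replicate l 0) then {replicate l 0} else {})" by auto
  then have card_Z: "card ?Z = (if P (replicate l 0) then 1 else 0)" by simp
  have card_U: "card ?U = (\<Sum>k<l. card {x \<in> first_nonzero_lists l k. P x})"
  proof (rule card_UN_disjoint)
    show "\<forall>i\<in>{..<l}. \<forall>j\<in>{..<l}. i \<noteq> j \<longrightarrow>
        {x \<in> first_nonzero_lists l i. P x} \<inter> {x \<in> first_nonzero_lists l j. P x} = {}"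
      by (auto simp: first_nonzero_lists_def) (metis linorder_neqE_nat)
  qed (use fin in auto)
  show ?thesis using split fin disjoint card_Z card_U by (simp add: card_Un_disjoint)
qed

lemma card_first_nonzero_low:
  assumes "k < m" "m \<le> n"
  shows "card {x \<in> (first_nonzero_lists (m + n + 1) k :: 'a::{finite,field} list set). mrank (hankel m n x) = r} =
    (if k + 1 \<le> r then (card (UNIV :: 'a set) - 1) * card (UNIV :: 'a set) ^ (k + 1) *
      card {y :: 'a list. length y = (m - k - 1) + (n - k - 1) + 1 \<and> mrank (hankel (m - k - 1) (n - k - 1) y) = r - k - 1}
     else 0)"
proof (cases "k + 1 \<le> r")
  case True
  then show ?thesis using card_first_nonzero_mrank[OF assms, of "r - k - 1", where 'a='a] by simp
next
  case False
  then have "{x \<in> (first_nonzero_lists (m + n + 1) k :: 'a list set). mrank (hankel m n x) = r} = {}"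
    using mrank_hankel_tail[OF _ assms] by force
  then show ?thesis unfolding \<open>{x \<in> _. _} = {}\<close> using False by simp
qed

lemma card_first_nonzero_high:
  assumes "m \<le> k" "k \<le> m + n" "m \<le> n"
  shows "card {x \<in> (first_nonzero_lists (m + n + 1) k :: 'a::{finite,field} list set). mrank (hankel m n x) = r} =
    (if r = min (m + 1) (m + n + 1 - k) then (card (UNIV :: 'a set) - 1) * card (UNIV :: 'a set) ^ (m + n - k) else 0)"
proof -
  have "{x \<in> (first_nonzero_lists (m + n + 1) k :: 'a list set). mrank (hankel m n x) = r} =
      (if r = min (m + 1) (m + n + 1 - k) then first_nonzero_lists (m + n + 1) k else {})"
    using mrank_hankel_leading_zeros[OF _ assms] by auto
  moreover have "m + n + 1 = k + Suc (m + n - k)" using assms by simp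
  ultimately show ?thesis using card_first_nonzero_lists[of k "m + n - k", where 'a='a] by simp
qed

lemma card_hankel_rank_by_first_nonzero:
  "card {x :: 'a::{finite,field} list. length x = m + n + 1 \<and> mrank (hankel m n x) = r} = (if r = 0 then 1 else 0)
    + (\<Sum>k<m. card {x \<in> (first_nonzero_lists (m + n + 1) k :: 'a list set). mrank (hankel m n x) = r})
    + (\<Sum>k\<in>{m..m + n}. card {x \<in> (first_nonzero_lists (m + n + 1) k :: 'a list set). mrank (hankel m n x) = r})"
proof -
  let ?C = "\<lambda>k. card {x \<in> (first_nonzero_lists (m + n + 1) k :: 'a list set). mrank (hankel m n x) = r}"
  have "card {x :: 'a list. length x = m + n + 1 \<and> mrank (hankel m n x) = r} =
      (if mrank (hankel m n (replicate (m + n + 1) (0::'a))) = r then 1 else 0) + (\<Sum>k<m + n + 1. ?C k)"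
    by (rule card_lists_by_first_nonzero)
  also have "(if mrank (hankel m n (replicate (m + n + 1) (0::'a))) = r then 1 else 0) = (if r = 0 then 1 else (0::nat))"
    unfolding mrank_hankel_zero by auto
  also have "{..<m + n + 1} = {..<m} \<union> {m..m + n}" by auto
  also have "(\<Sum>k\<in>{..<m} \<union> {m..m + n}. ?C k) = (\<Sum>k<m. ?C k) + (\<Sum>k\<in>{m..m + n}. ?C k)"
    by (rule sum.union_disjoint) auto
  finally show ?thesis by (simp only: add.assoc)
qed

lemma card_hankel_rank:
  fixes q :: nat
  assumes "q = card (UNIV :: 'a::{finite,field} set)" "m \<le> n"
  shows "card {x :: 'a list. length x = m + n + 1 \<and> mrank (hankel m n x) = r} = hankel_rank_count q m n r"
  using assms(2)
proof (induction m arbitrary: n r rule: less_induct)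
  case (less m)
  let ?C = "\<lambda>k. card {x \<in> (first_nonzero_lists (m + n + 1) k :: 'a list set). mrank (hankel m n x) = r}"
  have q: "1 \<le> q" using two_le_card_UNIV[where 'a='a] assms(1) by simp
  have "card {x :: 'a list. length x = m + n + 1 \<and> mrank (hankel m n x) = r} =
      (if r = 0 then 1 else 0) + (\<Sum>k<m. ?C k) + (\<Sum>k\<in>{m..m + n}. ?C k)"
    by (rule card_hankel_rank_by_first_nonzero)
  also have "(\<Sum>k<m. ?C k) =
      (\<Sum>k<m. if k + 1 \<le> r then (q - 1) * q ^ (k + 1) * hankel_rank_count q (m - k - 1) (n - k - 1) (r - k - 1) else 0)"
  proof (rule sum.cong[OF refl])
    fix k assume "k \<in> {..<m}"
    then have "k < m" by simp
    have IH: "card {y :: 'a list. length y = (m - k - 1) + (n - k - 1) + 1 \<and> mrank (hankel (m - k - 1) (n - k - 1) y) = r - k - 1} =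
        hankel_rank_count q (m - k - 1) (n - k - 1) (r - k - 1)"
      using \<open>k < m\<close> less.prems by (intro less.IH) auto
    show "?C k = (if k + 1 \<le> r then (q - 1) * q ^ (k + 1) * hankel_rank_count q (m - k - 1) (n - k - 1) (r - k - 1) else 0)"
      unfolding card_first_nonzero_low[OF \<open>k < m\<close> less.prems] IH assms(1) ..
  qed
  also have "(\<Sum>k\<in>{m..m + n}. ?C k) =
      (\<Sum>k\<in>{m..m + n}. if r = min (m + 1) (m + n + 1 - k) then (q - 1) * q ^ (m + n - k) else 0)"
  proof (rule sum.cong[OF refl])
    fix k assume "k \<in> {m..m + n}"
    then have "m \<le> k" "k \<le> m + n" by simp_all
    show "?C k = (if r = min (m + 1) (m + n + 1 - k) then (q - 1) * q ^ (m + n - k) else 0)"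
      unfolding card_first_nonzero_high[OF \<open>m \<le> k\<close> \<open>k \<le> m + n\<close> less.prems] assms(1) ..
  qed
  finally show ?case using hankel_rank_count_rec[OF q less.prems, of r] by simp
qed

theorem corollary2:
  fixes r m n :: nat and q :: nat
  assumes "q = card (UNIV :: 'a set)"
    and "m \<le> n"
  shows "card {x :: ('a::{finite, field}) list. length x = m + n + 1 \<and> mrank (hankel m n x) = r} =
    (if r = 0 then 1
     else if r \<le> m then q ^ (2 * r - 2) * (q ^ 2 - 1)
     else if r = m + 1 then q ^ (2 * r - 2) * (q ^ (n - m + 1) - 1)
     else 0)"
  using card_hankel_rank[OF assms] by (simp add: hankel_rank_count_def)

end
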